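(* A weighted game $\mathcal G$ is divergent if and only if, in each strongly connected component of the graph of $\mathcal G$, the simple cycles are either all of positive weight or all of negative weight.
   Context: A weighted game is a tuple $\langle V=V_{\mathrm{Min}}\uplus V_{\mathrm{Max}}, V_T, A, E, \omega\rangle$ with vertices $V$ split between two players, targets $V_T\subseteq V_{\mathrm{Min}}$, alphabet $A$, edges $E\subseteq V\times A\times V$ and weights $\omega\colon E\to\mathbb Z$; its graph is the directed graph $(V,E)$ (strongly connected components do not depend on the partition of vertices between players). A cycle is a finite sequence of consecutive edges $v_0\xrightarrow{a_0}v_1\cdots\xrightarrow{a_{k-1}}v_k$ with $k\geq 1$ and $v_k=v_0$; its weight is the sum of the weights of its edges; it is simple if no vertex is visited twice except $v_0=v_k$. The game is divergent if every cycle has nonzero weight. *)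

theory Defs
  imports Main
begin

text \<open>Edges are triples (source, letter, target).\<close>

definition weighted_game ::
  "'v set \<Rightarrow> 'v set \<Rightarrow> 'v set \<Rightarrow> 'a set \<Rightarrow> ('v \<times> 'a \<times> 'v) set \<Rightarrow> ('v \<times> 'a \<times> 'v \<Rightarrow> int) \<Rightarrow> bool" where
  "weighted_game VMin VMax VT A E \<omega> \<longleftrightarrow>
     VMin \<inter> VMax = {} \<and> VT \<subseteq> VMin \<and>
     E \<subseteq> (VMin \<union> VMax) \<times> A \<times> (VMin \<union> VMax)"

definition src :: "'v \<times> 'a \<times> 'v \<Rightarrow> 'v" where "src e = fst e"
definition trg :: "'v \<times> 'a \<times> 'v \<Rightarrow> 'v" where "trg e = snd (snd e)"

definition is_cycle :: "('v \<times> 'a \<times> 'v) set \<Rightarrow> ('v \<times> 'a \<times> 'v) list \<Rightarrow> bool" where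
  "is_cycle E es \<longleftrightarrow> es \<noteq> [] \<and> set es \<subseteq> E \<and>
     (\<forall>i. Suc i < length es \<longrightarrow> trg (es ! i) = src (es ! Suc i)) \<and>
     trg (last es) = src (hd es)"

definition is_simple_cycle :: "('v \<times> 'a \<times> 'v) set \<Rightarrow> ('v \<times> 'a \<times> 'v) list \<Rightarrow> bool" where
  "is_simple_cycle E es \<longleftrightarrow> is_cycle E es \<and> distinct (map src es)"

definition cycle_weight :: "('v \<times> 'a \<times> 'v \<Rightarrow> int) \<Rightarrow> ('v \<times> 'a \<times> 'v) list \<Rightarrow> int" where
  "cycle_weight \<omega> es = sum_list (map \<omega> es)"

definition divergent :: "('v \<times> 'a \<times> 'v) set \<Rightarrow> ('v \<times> 'a \<times> 'v \<Rightarrow> int) \<Rightarrow> bool" where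
  "divergent E \<omega> \<longleftrightarrow> (\<forall>es. is_cycle E es \<longrightarrow> cycle_weight \<omega> es \<noteq> 0)"

definition graph_rel :: "('v \<times> 'a \<times> 'v) set \<Rightarrow> ('v \<times> 'v) set" where
  "graph_rel E = {(u, v). \<exists>a. (u, a, v) \<in> E}"

definition sccs :: "'v set \<Rightarrow> ('v \<times> 'a \<times> 'v) set \<Rightarrow> 'v set set" where
  "sccs V E = {{v \<in> V. (u, v) \<in> (graph_rel E)\<^sup>* \<and> (v, u) \<in> (graph_rel E)\<^sup>*} | u. u \<in> V}"

end

theory Submission
  imports Defs
begin

text \<open>
  A cycle with a repeated vertex splits into two shorter cycles whose weights add up, so every
  cycle weight is a sum of weights of simple cycles on its vertices, all lying in one strongly
  connected component; hence uniform signs per component give divergence. Conversely, if a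
  component carries simple cycles P, N with w(P) > 0 > w(N), join them by paths p, q inside the
  component: the cycle going a times around P, along p, b times around N, back along q and then
  k more times around p @ q has weight a w(P) + b w(N) + (k + 1) w(p @ q), which vanishes for
  suitable a > 0, b, k.
\<close>

fun walk :: "('v \<times> 'a \<times> 'v) set \<Rightarrow> 'v \<Rightarrow> ('v \<times> 'a \<times> 'v) list \<Rightarrow> 'v \<Rightarrow> bool" where
  "walk E u [] v \<longleftrightarrow> u = v"
| "walk E u (e # es) v \<longleftrightarrow> e \<in> E \<and> src e = u \<and> walk E (trg e) es v"

lemma walk_append: "walk E u (xs @ ys) w \<longleftrightarrow> (\<exists>v. walk E u xs v \<and> walk E v ys w)"
  by (induction xs arbitrary: u) auto

lemma walk_appendI: "walk E u xs v \<Longrightarrow> walk E v ys w \<Longrightarrow> walk E u (xs @ ys) w"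
  by (auto simp: walk_append)

lemma walk_Cons_iff:
  "walk E u (e # es) v \<longleftrightarrow> e \<in> E \<and> src e = u \<and>
     (if es = [] then trg e = v else trg e = src (hd es) \<and> walk E (src (hd es)) es v)"
  by (cases es) auto

lemma walk_iff_chain:
  assumes "es \<noteq> []"
  shows "walk E u es v \<longleftrightarrow> set es \<subseteq> E \<and> src (hd es) = u \<and> trg (last es) = v \<and>
    (\<forall>i. Suc i < length es \<longrightarrow> trg (es ! i) = src (es ! Suc i))"
  using assms
proof (induction es arbitrary: u)
  case (Cons e es)
  show ?case
  proof (cases "es = []")
    case False
    have "(\<forall>i. Suc i < length (e # es) \<longrightarrow> trg ((e # es) ! i) = src ((e # es) ! Suc i)) \<longleftrightarrow>
      trg e = src (hd es) \<and> (\<forall>i. Suc i < length es \<longrightarrow> trg (es ! i) = src (es ! Suc i))"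
      using False by (auto simp: hd_conv_nth nth_Cons split: nat.splits)
    with Cons.IH[OF False] False show ?thesis by (auto simp: walk_Cons_iff)
  qed simp
qed simp

lemma is_cycle_iff_closed_walk: "is_cycle E es \<longleftrightarrow> es \<noteq> [] \<and> (\<exists>v. walk E v es v)"
  by (cases "es = []") (auto simp: is_cycle_def walk_iff_chain)

lemma walk_concat_replicate: "walk E v c v \<Longrightarrow> walk E v (concat (replicate n c)) v"
  by (induction n) (auto simp: walk_append)

lemma cycle_weight_append: "cycle_weight \<omega> (xs @ ys) = cycle_weight \<omega> xs + cycle_weight \<omega> ys"
  by (simp add: cycle_weight_def)

lemma cycle_weight_concat_replicate:
  "cycle_weight \<omega> (concat (replicate n c)) = int n * cycle_weight \<omega> c"
  by (induction n) (auto simp: cycle_weight_def algebra_simps)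

lemma walk_imp_rtrancl: "walk E u es v \<Longrightarrow> (u, v) \<in> (graph_rel E)\<^sup>*"
proof (induction es arbitrary: u)
  case (Cons e es)
  then have "(u, trg e) \<in> graph_rel E"
    by (cases e) (auto simp: graph_rel_def src_def trg_def)
  with Cons show ?case by (auto intro: converse_rtrancl_into_rtrancl)
qed simp

lemma rtrancl_imp_walk: "(u, v) \<in> (graph_rel E)\<^sup>* \<Longrightarrow> \<exists>p. walk E u p v"
proof (induction rule: rtrancl_induct)
  case base
  have "walk E u [] u" by simp
  then show ?case ..
next
  case (step y z)
  then obtain p a where "walk E u p y" "(y, a, z) \<in> E" by (auto simp: graph_rel_def)
  then have "walk E u (p @ [(y, a, z)]) z" by (auto simp: walk_append src_def trg_def)
  then show ?case ..
qed

lemma walk_through_src: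
  assumes "walk E u es w" and "e \<in> set es"
  shows "(u, src e) \<in> (graph_rel E)\<^sup>*" and "(src e, w) \<in> (graph_rel E)\<^sup>*"
proof -
  obtain xs ys where "es = xs @ e # ys" using assms(2) by (meson split_list)
  with assms(1) have "walk E u xs (src e)" "walk E (src e) (e # ys) w"
    by (auto simp: walk_append)
  then show "(u, src e) \<in> (graph_rel E)\<^sup>*" "(src e, w) \<in> (graph_rel E)\<^sup>*"
    by (simp_all only: walk_imp_rtrancl)
qed

lemma not_distinct_map_decomp:
  assumes "\<not> distinct (map f xs)"
  shows "\<exists>ys x zs y us. xs = ys @ x # zs @ y # us \<and> f x = f y"
proof -
  obtain as b bs cs where "map f xs = as @ b # bs @ b # cs"
    using not_distinct_decomp[OF assms] by auto
  then obtain ys r where "xs = ys @ r" "map f r = b # bs @ b # cs"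
    by (auto simp: map_eq_append_conv)
  moreover from this(2) obtain x r' where "r = x # r'" "f x = b" "map f r' = bs @ b # cs"
    by (auto simp: map_eq_Cons_conv)
  moreover from this(3) obtain zs r'' where "r' = zs @ r''" "map f r'' = b # cs"
    by (auto simp: map_eq_append_conv)
  moreover from this(2) obtain y us where "r'' = y # us" "f y = b"
    by (auto simp: map_eq_Cons_conv)
  ultimately have "xs = ys @ x # zs @ y # us" "f x = f y" by simp_all
  then show ?thesis by (intro exI conjI)
qed

lemma cycle_split_at_repeated_vertex:
  assumes "is_cycle E c" and "\<not> distinct (map src c)"
  obtains c1 c2 where "is_cycle E c1" "is_cycle E c2"
    "length c1 < length c" "length c2 < length c" "set c1 \<union> set c2 = set c"
    "cycle_weight \<omega> c = cycle_weight \<omega> c1 + cycle_weight \<omega> c2"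
proof -
  obtain ys x zs y us where c: "c = ys @ x # zs @ y # us" and xy: "src x = src y"
    using not_distinct_map_decomp[OF assms(2)] by blast
  obtain v where "walk E v (ys @ (x # zs) @ (y # us)) v"
    using assms(1) c by (auto simp: is_cycle_iff_closed_walk)
  then obtain a b where "walk E v ys a" "walk E a (x # zs) b" "walk E b (y # us) v"
    unfolding walk_append by blast
  moreover from this have "a = src x" "b = src y" by simp_all
  ultimately have "is_cycle E (x # zs)" "is_cycle E (ys @ y # us)"
    using xy by (auto simp: is_cycle_iff_closed_walk walk_append simp del: walk.simps(2))
  then show ?thesis
    by (rule that) (auto simp: c cycle_weight_def)
qed

lemma cycle_weight_simple_cycle_induct:
  assumes add: "\<And>x y. P x \<Longrightarrow> P y \<Longrightarrow> P (x + y)"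
    and "is_cycle E c"
    and simple: "\<And>s. is_simple_cycle E s \<Longrightarrow> set s \<subseteq> set c \<Longrightarrow> P (cycle_weight \<omega> s)"
  shows "P (cycle_weight \<omega> c)"
  using assms(2) simple
proof (induction "length c" arbitrary: c rule: less_induct)
  case less
  show ?case
  proof (cases "distinct (map src c)")
    case True
    with less.prems show ?thesis by (simp add: is_simple_cycle_def)
  next
    case False
    obtain c1 c2 where c1: "is_cycle E c1" "length c1 < length c"
      and c2: "is_cycle E c2" "length c2 < length c"
      and "set c1 \<union> set c2 = set c"
      and weight: "cycle_weight \<omega> c = cycle_weight \<omega> c1 + cycle_weight \<omega> c2"
      by (rule cycle_split_at_repeated_vertex[OF less.prems(1) False])
    then have "set c1 \<subseteq> set c" "set c2 \<subseteq> set c" by auto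
    have "P (cycle_weight \<omega> c1)"
      by (rule less.hyps[OF c1(2,1)]) (use less.prems(2) \<open>set c1 \<subseteq> set c\<close> in blast)
    moreover have "P (cycle_weight \<omega> c2)"
      by (rule less.hyps[OF c2(2,1)]) (use less.prems(2) \<open>set c2 \<subseteq> set c\<close> in blast)
    ultimately show ?thesis unfolding weight by (rule add)
  qed
qed

text \<open>With Suc k = -p n, take (a, b) = (-n, p (1 + d)) if d \<ge> 0 and (-n (1 - d), p) otherwise.\<close>

lemma zero_combination_pos_neg:
  fixes p n d :: int
  assumes "0 < p" and "n < 0"
  shows "\<exists>a b k :: nat. 0 < a \<and> int a * p + int b * n + int (Suc k) * d = 0"
proof -
  have "0 < - p * n" using assms by (simp add: mult_pos_neg)
  then obtain k where k: "int (Suc k) = - p * n"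
    by (metis gr0_implies_Suc of_nat_0_less_iff pos_int_cases)
  show ?thesis
  proof (cases "0 \<le> d")
    case True
    then have a: "int (nat (- n)) = - n" and b: "int (nat (p + p * d)) = p + p * d"
      using assms by simp_all
    have "int (nat (- n)) * p + int (nat (p + p * d)) * n + int (Suc k) * d = 0"
      unfolding a b k by (simp add: algebra_simps)
    moreover have "0 < nat (- n)" using assms by simp
    ultimately show ?thesis by blast
  next
    case False
    then have a: "int (nat (- n + n * d)) = - n + n * d" and b: "int (nat p) = p"
      using assms by (simp_all add: mult_neg_neg)
    have "int (nat (- n + n * d)) * p + int (nat p) * n + int (Suc k) * d = 0"
      unfolding a b k by (simp add: algebra_simps)
    moreover have "0 < nat (- n + n * d)" using assms False by (simp add: mult_neg_neg)
    ultimately show ?thesis by blast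
  qed
qed

lemma zero_weight_cycle_if_opposite_signs:
  assumes "walk E u P u" "walk E v N v" "walk E u p v" "walk E v q u"
    and "0 < cycle_weight \<omega> P" "cycle_weight \<omega> N < 0"
  shows "\<exists>c. is_cycle E c \<and> cycle_weight \<omega> c = 0"
proof -
  obtain a b k :: nat where "0 < a"
    and zero: "int a * cycle_weight \<omega> P + int b * cycle_weight \<omega> N
               + int (Suc k) * cycle_weight \<omega> (p @ q) = 0"
    using zero_combination_pos_neg assms(5,6) by blast
  define c where
    "c = concat (replicate a P) @ p @ concat (replicate b N) @ q @ concat (replicate k (p @ q))"
  have "walk E u c u"
    unfolding c_def
    using walk_concat_replicate[OF assms(1)] walk_concat_replicate[OF assms(2)]
      walk_concat_replicate[OF walk_appendI[OF assms(3,4)]] assms(3,4)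
    by (intro walk_appendI) assumption+
  moreover have "c \<noteq> []"
    using \<open>0 < a\<close> assms(5) by (cases a) (auto simp: c_def cycle_weight_def)
  moreover have "cycle_weight \<omega> c = 0"
    using zero by (simp add: c_def cycle_weight_append cycle_weight_concat_replicate algebra_simps)
  ultimately show ?thesis by (auto simp: is_cycle_iff_closed_walk)
qed

lemma scc_strongly_connected:
  assumes "C \<in> sccs V E" and "u \<in> C" and "v \<in> C"
  shows "\<exists>p. walk E u p v"
proof -
  from assms have "(u, v) \<in> (graph_rel E)\<^sup>*"
    unfolding sccs_def by (blast intro: rtrancl_trans)
  then show ?thesis by (rule rtrancl_imp_walk)
qed

lemma cycle_in_scc:
  assumes "is_cycle E c" and "fst ` E \<subseteq> V"
  shows "\<exists>C \<in> sccs V E. set (map src c) \<subseteq> C"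
proof -
  obtain u where u: "walk E u c u" and "c \<noteq> []" using assms(1) by (auto simp: is_cycle_iff_closed_walk)
  have srcV: "src e \<in> V" if "e \<in> set c" for e
    using that assms by (auto simp: is_cycle_def src_def)
  have "u \<in> V" using u \<open>c \<noteq> []\<close> srcV by (cases c) auto
  let ?C = "{v \<in> V. (u, v) \<in> (graph_rel E)\<^sup>* \<and> (v, u) \<in> (graph_rel E)\<^sup>*}"
  have "?C \<in> sccs V E" using \<open>u \<in> V\<close> unfolding sccs_def by blast
  moreover have "set (map src c) \<subseteq> ?C"
    using srcV walk_through_src[OF u] by auto
  ultimately show ?thesis by blast
qed

lemma zero_weight_cycle_in_scc:
  assumes "C \<in> sccs V E"
    and "is_cycle E P" "set (map src P) \<subseteq> C" "0 < cycle_weight \<omega> P"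
    and "is_cycle E N" "set (map src N) \<subseteq> C" "cycle_weight \<omega> N < 0"
  shows "\<exists>c. is_cycle E c \<and> cycle_weight \<omega> c = 0"
proof -
  obtain u where u: "walk E u P u" "u \<in> C"
    using assms(2,3) by (cases P) (auto simp: is_cycle_iff_closed_walk)
  obtain v where v: "walk E v N v" "v \<in> C"
    using assms(5,6) by (cases N) (auto simp: is_cycle_iff_closed_walk)
  obtain p q where "walk E u p v" "walk E v q u"
    using scc_strongly_connected[OF assms(1)] u(2) v(2) by metis
  then show ?thesis
    using zero_weight_cycle_if_opposite_signs[OF u(1) v(1) _ _ assms(4,7)] by blast
qed

lemma sccs_sign_uniform_if_divergent:
  assumes "divergent E \<omega>" and C: "C \<in> sccs V E"
  shows "(\<forall>c. is_simple_cycle E c \<and> set (map src c) \<subseteq> C \<longrightarrow> cycle_weight \<omega> c > 0) \<or>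
         (\<forall>c. is_simple_cycle E c \<and> set (map src c) \<subseteq> C \<longrightarrow> cycle_weight \<omega> c < 0)"
proof (rule ccontr)
  assume "\<not> ?thesis"
  then obtain P N where P: "is_cycle E P" "set (map src P) \<subseteq> C" "cycle_weight \<omega> P \<ge> 0"
    and N: "is_cycle E N" "set (map src N) \<subseteq> C" "cycle_weight \<omega> N \<le> 0"
    by (auto simp: is_simple_cycle_def not_less)
  with assms(1) have "0 < cycle_weight \<omega> P" "cycle_weight \<omega> N < 0"
    by (auto simp: divergent_def order.order_iff_strict)
  then obtain c where "is_cycle E c" "cycle_weight \<omega> c = 0"
    using zero_weight_cycle_in_scc[OF C P(1,2) _ N(1,2)] by blast
  with assms(1) show False by (simp add: divergent_def)
qed

lemma divergent_if_sccs_sign_uniform: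
  assumes "fst ` E \<subseteq> V"
    and sign: "\<forall>C \<in> sccs V E.
       (\<forall>c. is_simple_cycle E c \<and> set (map src c) \<subseteq> C \<longrightarrow> cycle_weight \<omega> c > 0) \<or>
       (\<forall>c. is_simple_cycle E c \<and> set (map src c) \<subseteq> C \<longrightarrow> cycle_weight \<omega> c < 0)"
  shows "divergent E \<omega>"
  unfolding divergent_def
proof (intro allI impI)
  fix c assume c: "is_cycle E c"
  then obtain C where "C \<in> sccs V E" "set (map src c) \<subseteq> C"
    using cycle_in_scc assms(1) by blast
  have sub: "set (map src s) \<subseteq> C" if "set s \<subseteq> set c" for s
    using that \<open>set (map src c) \<subseteq> C\<close> by auto
  from bspec[OF sign \<open>C \<in> sccs V E\<close>] show "cycle_weight \<omega> c \<noteq> 0"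
  proof
    assume pos: "\<forall>s. is_simple_cycle E s \<and> set (map src s) \<subseteq> C \<longrightarrow> cycle_weight \<omega> s > 0"
    have "0 < cycle_weight \<omega> c"
      by (rule cycle_weight_simple_cycle_induct[where P = "\<lambda>x. 0 < x", OF _ c])
        (use pos sub in auto)
    then show ?thesis by simp
  next
    assume neg: "\<forall>s. is_simple_cycle E s \<and> set (map src s) \<subseteq> C \<longrightarrow> cycle_weight \<omega> s < 0"
    have "cycle_weight \<omega> c < 0"
      by (rule cycle_weight_simple_cycle_induct[where P = "\<lambda>x. x < 0", OF _ c])
        (use neg sub in auto)
    then show ?thesis by simp
  qed
qed

theorem proposition1:
  fixes VMin VMax VT :: "'v set" and A :: "'a set"
    and E :: "('v \<times> 'a \<times> 'v) set" and \<omega> :: "'v \<times> 'a \<times> 'v \<Rightarrow> int"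
  assumes "weighted_game VMin VMax VT A E \<omega>"
  shows "divergent E \<omega> \<longleftrightarrow>
    (\<forall>C \<in> sccs (VMin \<union> VMax) E.
       (\<forall>c. is_simple_cycle E c \<and> set (map src c) \<subseteq> C \<longrightarrow> cycle_weight \<omega> c > 0) \<or>
       (\<forall>c. is_simple_cycle E c \<and> set (map src c) \<subseteq> C \<longrightarrow> cycle_weight \<omega> c < 0))"
proof -
  have "fst ` E \<subseteq> VMin \<union> VMax" using assms by (auto simp: weighted_game_def)
  then show ?thesis
    by (intro iffI ballI; elim sccs_sign_uniform_if_divergent divergent_if_sccs_sign_uniform)
qed

end
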